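(* Let $\mathbb{F}_2$ be the free group on generators $a,b$, let $\ell\colon \mathbb{F}_2\to\mathbb{N}$ be the word length with respect to $\{a,a^{-1},b,b^{-1}\}$, let $\gamma_n(\mathbb{F}_2)$ denote the $n$-th term of the lower central series ($\gamma_1(\mathbb{F}_2)=\mathbb{F}_2$, $\gamma_{n+1}(\mathbb{F}_2)=[\gamma_n(\mathbb{F}_2),\mathbb{F}_2]$), and set $\alpha(n):=\min\{\ell(w)\mid w\in\gamma_n(\mathbb{F}_2)\setminus\{e\}\}$ and $\alpha:=\lim_{n\to\infty}\frac{\log_2(\alpha(n))}{\log_2(n)}$. Then $$\alpha\le \log_{\varphi}(2)=1.440\ldots,$$ where $\varphi=\frac{1+\sqrt5}{2}$ is the golden ratio; equivalently, $\alpha(n)\preceq n^{\log_\varphi(2)+\varepsilon}$ for all $\varepsilon>0$.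
   Context: The limit defining $\alpha$ is known to exist. For functions $f,g\colon\mathbb{N}\to\mathbb{R}$, $f(n)\preceq g(n)$ means there is a constant $C$ such that $f(n)\le C\,g(Cn)$ for all $n\in\mathbb{N}$. *)

theory Defs
  imports "HOL-Analysis.Analysis" "HOL-Algebra.Generated_Groups"
begin

text \<open>Letters of the alphabet {a, a^-1, b, b^-1}: the first component selects the
generator (False = a, True = b), the second says whether it is inverted.\<close>
type_synonym letter = "bool \<times> bool"

definition inv_letter :: "letter \<Rightarrow> letter" where
  "inv_letter x = (fst x, \<not> snd x)"

fun reduce :: "letter list \<Rightarrow> letter list" where
  "reduce [] = []"
| "reduce (x # xs) =
     (case reduce xs of
        [] \<Rightarrow> [x]
      | y # ys \<Rightarrow> (if y = inv_letter x then ys else x # y # ys))"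

definition F2 :: "letter list monoid" where
  "F2 = \<lparr> carrier = {w. reduce w = w},
          mult = (\<lambda>u v. reduce (u @ v)),
          one = [] \<rparr>"

definition word_length :: "letter list \<Rightarrow> nat" where
  "word_length g = (LEAST k. \<exists>xs. reduce xs = g \<and> length xs = k)"

definition comm_subgroup :: "letter list set \<Rightarrow> letter list set" where
  "comm_subgroup H = generate F2
     (\<Union>h\<in>H. \<Union>g\<in>carrier F2. {h \<otimes>\<^bsub>F2\<^esub> g \<otimes>\<^bsub>F2\<^esub> inv\<^bsub>F2\<^esub> h \<otimes>\<^bsub>F2\<^esub> inv\<^bsub>F2\<^esub> g})"

text \<open>Lower central series: gamma 1 = F_2, gamma (n+1) = [gamma n, F_2]
(gamma 0 is set to F_2 as well, it plays no role).\<close>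
fun gamma :: "nat \<Rightarrow> letter list set" where
  "gamma 0 = carrier F2"
| "gamma (Suc n) = (if n = 0 then carrier F2 else comm_subgroup (gamma n))"

definition alpha_seq :: "nat \<Rightarrow> nat" where
  "alpha_seq n = (LEAST k. \<exists>w \<in> gamma n - {\<one>\<^bsub>F2\<^esub>}. word_length w = k)"

definition golden_ratio :: real where
  "golden_ratio = (1 + sqrt 5) / 2"

end

theory Submission
  imports Defs "HOL-Number_Theory.Fib" "HOL-Real_Asymp.Real_Asymp"
begin

text \<open>Let \<open>Y\<^sub>0 = a\<close>, \<open>Y\<^sub>1 = ab\<close> and \<open>Y\<^sub>k\<^sub>+\<^sub>2 = [Y\<^sub>k\<^sup>-\<^sup>1, Y\<^sub>k\<^sub>+\<^sub>1]\<close>. Since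
  \<open>[\<gamma>\<^sub>i, \<gamma>\<^sub>j] \<subseteq> \<gamma>\<^sub>i\<^sub>+\<^sub>j\<close> (a consequence of the Hall--Witt identity), \<open>Y\<^sub>k\<close> lies in
  \<open>\<gamma>\<^sub>F\<^sub>k\<^sub>+\<^sub>1\<close> for the Fibonacci numbers \<open>F\<close>, and it is a nontrivial reduced word of
  length \<open>2\<^sup>k\<close> because no cancellation ever occurs. Hence \<open>\<alpha>(F\<^sub>k\<^sub>+\<^sub>1) \<le> 2\<^sup>k\<close>, while
  \<open>F\<^sub>k\<^sub>+\<^sub>1 \<ge> \<phi>\<^sup>k\<^sup>-\<^sup>1\<close>; along \<open>n = F\<^sub>k\<^sub>+\<^sub>1\<close> the quotient \<open>log\<^sub>2 \<alpha>(n) / log\<^sub>2 n\<close> is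
  therefore at most \<open>k / ((k - 1) log\<^sub>2 \<phi>) \<rightarrow> log\<^sub>\<phi> 2\<close>.\<close>

section \<open>The lower central series of a group\<close>

definition commutator :: "('a, 'b) monoid_scheme \<Rightarrow> 'a \<Rightarrow> 'a \<Rightarrow> 'a" where
  "commutator G x y = x \<otimes>\<^bsub>G\<^esub> y \<otimes>\<^bsub>G\<^esub> inv\<^bsub>G\<^esub> x \<otimes>\<^bsub>G\<^esub> inv\<^bsub>G\<^esub> y"

definition commutator_set :: "('a, 'b) monoid_scheme \<Rightarrow> 'a set \<Rightarrow> 'a set \<Rightarrow> 'a set" where
  "commutator_set G H K = (\<Union>h\<in>H. \<Union>k\<in>K. {commutator G h k})"

text \<open>Indexed from 0: \<open>lower_central_series G n\<close> is the term \<open>\<gamma>\<^sub>n\<^sub>+\<^sub>1(G)\<close>.\<close>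
fun lower_central_series :: "('a, 'b) monoid_scheme \<Rightarrow> nat \<Rightarrow> 'a set" where
  "lower_central_series G 0 = carrier G"
| "lower_central_series G (Suc n) =
     generate G (commutator_set G (lower_central_series G n) (carrier G))"

declare lower_central_series.simps(2) [simp del]

context group
begin

lemma mult_inv_cancel_left: "x \<in> carrier G \<Longrightarrow> y \<in> carrier G \<Longrightarrow> x \<otimes> (inv x \<otimes> y) = y"
  by (simp flip: m_assoc)

lemma inv_mult_cancel_left: "x \<in> carrier G \<Longrightarrow> y \<in> carrier G \<Longrightarrow> inv x \<otimes> (x \<otimes> y) = y"
  by (simp flip: m_assoc)

lemmas group_word_simps = commutator_def m_assoc inv_mult_group mult_inv_cancel_left inv_mult_cancel_left

lemma commutator_closed [intro, simp]:
  "x \<in> carrier G \<Longrightarrow> y \<in> carrier G \<Longrightarrow> commutator G x y \<in> carrier G"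
  by (simp add: commutator_def)

lemma inv_commutator: "x \<in> carrier G \<Longrightarrow> y \<in> carrier G \<Longrightarrow> inv (commutator G x y) = commutator G y x"
  by (simp add: group_word_simps)

lemma conj_commutator:
  "g \<in> carrier G \<Longrightarrow> x \<in> carrier G \<Longrightarrow> y \<in> carrier G \<Longrightarrow>
    g \<otimes> commutator G x y \<otimes> inv g = commutator G (g \<otimes> x \<otimes> inv g) (g \<otimes> y \<otimes> inv g)"
  by (simp add: group_word_simps)

lemma commutator_inv_left:
  "x \<in> carrier G \<Longrightarrow> y \<in> carrier G \<Longrightarrow> commutator G (inv x) y = inv x \<otimes> commutator G y x \<otimes> x"
  by (simp add: group_word_simps)

lemma commutator_mult_left:
  "u \<in> carrier G \<Longrightarrow> v \<in> carrier G \<Longrightarrow> x \<in> carrier G \<Longrightarrow>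
    commutator G (u \<otimes> v) x = (u \<otimes> commutator G v x \<otimes> inv u) \<otimes> commutator G u x"
  by (simp add: group_word_simps)

lemma hall_witt_identity:
  assumes "g \<in> carrier G" "h \<in> carrier G" "x \<in> carrier G"
  shows "(h \<otimes> commutator G (commutator G (inv h) x) (inv g) \<otimes> inv h)
    \<otimes> (inv g \<otimes> commutator G (commutator G g h) x \<otimes> g)
    \<otimes> (x \<otimes> commutator G (commutator G (inv x) (inv g)) h \<otimes> inv x) = \<one>"
  using assms by (simp add: group_word_simps)

lemma eq_inv_mult_inv_of_mult3_eq_one:
  assumes "a \<in> carrier G" "b \<in> carrier G" "c \<in> carrier G" "a \<otimes> b \<otimes> c = \<one>"
  shows "b = inv a \<otimes> inv c"
proof -
  have "inv a \<otimes> (a \<otimes> b \<otimes> c) \<otimes> inv c = inv a \<otimes> inv c"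
    using assms by simp
  then show ?thesis using assms(1-3) by (simp add: m_assoc inv_mult_cancel_left)
qed

lemma three_subgroup_mem:
  assumes N: "N \<lhd> G" and g: "g \<in> carrier G" and h: "h \<in> carrier G" and x: "x \<in> carrier G"
    and "commutator G (commutator G (inv h) x) (inv g) \<in> N"
    and "commutator G (commutator G (inv x) (inv g)) h \<in> N"
  shows "commutator G (commutator G g h) x \<in> N"
proof -
  interpret N: normal N G by (rule N)
  define u where "u = h \<otimes> commutator G (commutator G (inv h) x) (inv g) \<otimes> inv h"
  define v where "v = x \<otimes> commutator G (commutator G (inv x) (inv g)) h \<otimes> inv x"
  define w where "w = inv g \<otimes> commutator G (commutator G g h) x \<otimes> g"
  have "u \<in> N" "v \<in> N"
    unfolding u_def v_def using assms by (simp_all only: N.inv_op_closed2)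
  have "w = inv u \<otimes> inv v"
  proof (rule eq_inv_mult_inv_of_mult3_eq_one)
    show "u \<otimes> w \<otimes> v = \<one>"
      unfolding u_def v_def w_def using g h x by (rule hall_witt_identity)
  qed (use \<open>u \<in> N\<close> \<open>v \<in> N\<close> g h x in \<open>auto simp: w_def\<close>)
  then have "w \<in> N" using \<open>u \<in> N\<close> \<open>v \<in> N\<close> by simp
  with g have "g \<otimes> w \<otimes> inv g \<in> N" by (rule N.inv_op_closed2)
  then show ?thesis using g h x by (simp add: w_def m_assoc mult_inv_cancel_left)
qed

lemma subgroup_commutator_left_mem:
  assumes N: "N \<lhd> G" and x: "x \<in> carrier G"
  shows "subgroup {y \<in> carrier G. commutator G y x \<in> N} G"
proof -
  interpret N: normal N G by (rule N)
  show ?thesis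
  proof (rule subgroupI)
    have "commutator G \<one> x = \<one>" using x by (simp add: commutator_def)
    then show "{y \<in> carrier G. commutator G y x \<in> N} \<noteq> {}" by force
  next
    fix y assume "y \<in> {y \<in> carrier G. commutator G y x \<in> N}"
    then have y: "y \<in> carrier G" and "commutator G y x \<in> N" by simp_all
    then have "commutator G x y \<in> N"
      using x N.m_inv_closed inv_commutator by metis
    with y have "inv y \<otimes> commutator G x y \<otimes> y \<in> N" by (rule N.inv_op_closed1)
    then show "inv y \<in> {y \<in> carrier G. commutator G y x \<in> N}"
      using x y by (simp add: commutator_inv_left)
  next
    fix y z assume "y \<in> {y \<in> carrier G. commutator G y x \<in> N}" "z \<in> {y \<in> carrier G. commutator G y x \<in> N}"
    then have y: "y \<in> carrier G" "commutator G y x \<in> N" and z: "z \<in> carrier G" "commutator G z x \<in> N"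
      by simp_all
    have "y \<otimes> commutator G z x \<otimes> inv y \<in> N" using y z by (simp only: N.inv_op_closed2)
    then show "y \<otimes> z \<in> {y \<in> carrier G. commutator G y x \<in> N}"
      using x y z by (simp add: commutator_mult_left)
  qed auto
qed

lemma commutator_set_subset_carrier:
  "H \<subseteq> carrier G \<Longrightarrow> commutator_set G H (carrier G) \<subseteq> carrier G"
  by (auto simp: commutator_set_def)

lemma lower_central_series_normal: "lower_central_series G n \<lhd> G"
proof (induction n)
  case 0
  then show ?case by (simp add: normal_invI subgroup_self)
next
  case (Suc n)
  then interpret N: normal "lower_central_series G n" G .
  show ?case
    unfolding lower_central_series.simps(2)
  proof (rule normal_generateI[OF commutator_set_subset_carrier[OF N.subset]])
    fix c g assume "c \<in> commutator_set G (lower_central_series G n) (carrier G)" and g: "g \<in> carrier G"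
    then obtain x y where x: "x \<in> lower_central_series G n" and y: "y \<in> carrier G"
      and c: "c = commutator G x y"
      by (auto simp: commutator_set_def)
    have "g \<otimes> x \<otimes> inv g \<in> lower_central_series G n" "g \<otimes> y \<otimes> inv g \<in> carrier G"
      using g x y by (simp_all add: N.inv_op_closed2)
    moreover have "g \<otimes> c \<otimes> inv g = commutator G (g \<otimes> x \<otimes> inv g) (g \<otimes> y \<otimes> inv g)"
      using c g x y N.subset by (auto simp: conj_commutator)
    ultimately show "g \<otimes> c \<otimes> inv g \<in> commutator_set G (lower_central_series G n) (carrier G)"
      unfolding commutator_set_def by blast
  qed
qed

lemma lower_central_series_subgroup: "subgroup (lower_central_series G n) G"
  using lower_central_series_normal by (rule normal_imp_subgroup)

lemma lower_central_series_subset: "lower_central_series G n \<subseteq> carrier G"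
  using lower_central_series_subgroup by (rule subgroup.subset)

lemma lower_central_series_inv_closed:
  "x \<in> lower_central_series G n \<Longrightarrow> inv x \<in> lower_central_series G n"
  using lower_central_series_subgroup by (rule subgroup.m_inv_closed)

lemma commutator_mem_lower_central_series_Suc:
  assumes "x \<in> lower_central_series G n" "y \<in> carrier G"
  shows "commutator G x y \<in> lower_central_series G (Suc n)"
  unfolding lower_central_series.simps(2)
  by (rule generate.incl) (use assms in \<open>auto simp: commutator_set_def\<close>)

text \<open>Induction on \<open>j\<close>: the three subgroup lemma handles the generators \<open>[g, h]\<close> of
  \<open>\<gamma>\<^sub>j\<^sub>+\<^sub>1\<close>, and the elements \<open>y\<close> with \<open>[y, x] \<in> \<gamma>\<^sub>i\<^sub>+\<^sub>j\<^sub>+\<^sub>1\<close> form a subgroup.\<close>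
theorem commutator_mem_lower_central_series:
  "x \<in> lower_central_series G i \<Longrightarrow> y \<in> lower_central_series G j \<Longrightarrow>
    commutator G x y \<in> lower_central_series G (Suc (i + j))"
proof (induction j arbitrary: i x y)
  case 0
  then show ?case using commutator_mem_lower_central_series_Suc by simp
next
  case (Suc j)
  let ?N = "lower_central_series G (Suc (i + Suc j))"
  have x: "x \<in> carrier G" using Suc.prems(1) lower_central_series_subset by blast
  have gens: "commutator_set G (lower_central_series G j) (carrier G)
      \<subseteq> {y \<in> carrier G. commutator G y x \<in> ?N}"
  proof
    fix c assume "c \<in> commutator_set G (lower_central_series G j) (carrier G)"
    then obtain g h where g: "g \<in> lower_central_series G j" and h: "h \<in> carrier G"
      and c: "c = commutator G g h"
      by (auto simp: commutator_set_def)
    have gG: "g \<in> carrier G" using g lower_central_series_subset by blast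
    have "commutator G x (inv h) \<in> lower_central_series G (Suc i)"
      using Suc.prems(1) h by (simp add: commutator_mem_lower_central_series_Suc)
    then have "commutator G (inv h) x \<in> lower_central_series G (Suc i)"
      using lower_central_series_inv_closed x h by (fastforce simp: inv_commutator)
    then have "commutator G (commutator G (inv h) x) (inv g) \<in> ?N"
      using Suc.IH lower_central_series_inv_closed[OF g] by fastforce
    moreover have "commutator G (inv x) (inv g) \<in> lower_central_series G (Suc (i + j))"
      using Suc.IH lower_central_series_inv_closed Suc.prems(1) g by blast
    then have "commutator G (commutator G (inv x) (inv g)) h \<in> ?N"
      using h by (simp add: commutator_mem_lower_central_series_Suc)
    ultimately show "c \<in> {y \<in> carrier G. commutator G y x \<in> ?N}"
      using three_subgroup_mem[OF lower_central_series_normal gG h x] c gG h by simp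
  qed
  have "generate G (commutator_set G (lower_central_series G j) (carrier G))
      \<subseteq> {y \<in> carrier G. commutator G y x \<in> ?N}"
    by (rule generate_subgroup_incl[OF gens subgroup_commutator_left_mem[OF lower_central_series_normal x]])
  then have y: "y \<in> carrier G" and yx: "commutator G y x \<in> ?N"
    using Suc.prems(2) by (auto simp: lower_central_series.simps(2))
  from yx have "inv (commutator G y x) \<in> ?N" by (rule lower_central_series_inv_closed)
  then show ?case using x y by (simp add: inv_commutator)
qed

end

section \<open>The free group on two generators\<close>

definition cons_reduced :: "letter \<Rightarrow> letter list \<Rightarrow> letter list" where
  "cons_reduced x r = (case r of [] \<Rightarrow> [x] | y # ys \<Rightarrow> (if y = inv_letter x then ys else x # y # ys))"

lemma reduce_Cons: "reduce (x # xs) = cons_reduced x (reduce xs)"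
  by (simp add: cons_reduced_def)

lemma inv_letter_inv_letter [simp]: "inv_letter (inv_letter x) = x"
  by (simp add: inv_letter_def)

lemma inv_letter_neq [simp]: "inv_letter x \<noteq> x" "x \<noteq> inv_letter x"
  by (auto simp: inv_letter_def prod_eq_iff)

fun reduced :: "letter list \<Rightarrow> bool" where
  "reduced [] = True"
| "reduced [x] = True"
| "reduced (x # y # ys) = (y \<noteq> inv_letter x \<and> reduced (y # ys))"

lemma reduced_cons_reduced: "reduced r \<Longrightarrow> reduced (cons_reduced x r)"
  by (cases r rule: reduced.cases) (auto simp: cons_reduced_def)

lemma reduced_reduce: "reduced (reduce w)"
  by (induction w) (auto simp: reduce_Cons reduced_cons_reduced simp del: reduce.simps(2))

lemma reduce_reduced: "reduced w \<Longrightarrow> reduce w = w"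
  by (induction w rule: reduced.induct) auto

lemma reduce_eq_iff_reduced: "reduce w = w \<longleftrightarrow> reduced w"
  by (metis reduced_reduce reduce_reduced)

lemma reduce_reduce [simp]: "reduce (reduce w) = reduce w"
  by (simp add: reduce_reduced reduced_reduce)

lemma reduce_append: "reduce (u @ v) = foldr cons_reduced u (reduce v)"
  by (induction u) (auto simp: reduce_Cons simp del: reduce.simps)

lemma cons_reduced_inv_letter: "reduced r \<Longrightarrow> cons_reduced x (cons_reduced (inv_letter x) r) = r"
  by (cases r rule: reduced.cases) (auto simp: cons_reduced_def)

lemma reduced_foldr_cons_reduced: "reduced r \<Longrightarrow> reduced (foldr cons_reduced u r)"
  by (induction u) (auto simp: reduced_cons_reduced)

lemma foldr_cons_reduced_cons_reduced:
  assumes "reduced w" "reduced r"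
  shows "foldr cons_reduced (cons_reduced x w) r = cons_reduced x (foldr cons_reduced w r)"
proof (cases w)
  case (Cons y ys)
  show ?thesis
  proof (cases "y = inv_letter x")
    case True
    have "reduced ys" using \<open>reduced w\<close> Cons by (cases ys) auto
    moreover have "cons_reduced x w = ys" using Cons True by (simp add: cons_reduced_def)
    ultimately show ?thesis using Cons True \<open>reduced r\<close>
      by (simp add: cons_reduced_inv_letter reduced_foldr_cons_reduced)
  qed (use Cons in \<open>auto simp: cons_reduced_def\<close>)
qed (auto simp: cons_reduced_def)

lemma foldr_cons_reduced_reduce: "reduced r \<Longrightarrow> foldr cons_reduced (reduce u) r = foldr cons_reduced u r"
  by (induction u)
    (auto simp: reduce_Cons foldr_cons_reduced_cons_reduced reduced_reduce simp del: reduce.simps(2))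

lemma reduce_append_reduce_left: "reduce (reduce u @ v) = reduce (u @ v)"
  by (simp add: reduce_append foldr_cons_reduced_reduce reduced_reduce)

lemma reduce_append_reduce_right: "reduce (u @ reduce v) = reduce (u @ v)"
  by (simp add: reduce_append)

definition inverse_word :: "letter list \<Rightarrow> letter list" where
  "inverse_word w = rev (map inv_letter w)"

lemma reduce_inverse_word_append: "reduce (inverse_word w @ w) = []"
proof (induction w)
  case (Cons x xs)
  have "reduce (inverse_word (x # xs) @ x # xs)
      = reduce (inverse_word xs @ reduce (inv_letter x # x # xs))"
    by (simp add: inverse_word_def reduce_append_reduce_right del: reduce.simps)
  also have "reduce (inv_letter x # x # xs) = reduce xs"
    using cons_reduced_inv_letter[OF reduced_reduce, of "inv_letter x" xs]
    by (simp add: reduce_Cons del: reduce.simps)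
  finally show ?case using Cons by (simp add: reduce_append_reduce_right del: reduce.simps)
qed (simp add: inverse_word_def)

lemma reduced_append:
  "reduced (u @ v) \<longleftrightarrow> reduced u \<and> reduced v \<and> (u = [] \<or> v = [] \<or> hd v \<noteq> inv_letter (last u))"
  by (induction u rule: reduced.induct; cases v) auto

lemma reduced_inverse_word [simp]: "reduced (inverse_word w) = reduced w"
  unfolding inverse_word_def by (induction w rule: reduced.induct) (auto simp: reduced_append)

lemma group_F2: "group F2"
proof (rule groupI)
  fix x assume "x \<in> carrier F2"
  then show "\<exists>y\<in>carrier F2. y \<otimes>\<^bsub>F2\<^esub> x = \<one>\<^bsub>F2\<^esub>"
    by (intro bexI[of _ "inverse_word x"])
      (auto simp: F2_def reduce_inverse_word_append reduce_eq_iff_reduced)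
next
  fix x y z assume "x \<in> carrier F2" "y \<in> carrier F2" "z \<in> carrier F2"
  then show "x \<otimes>\<^bsub>F2\<^esub> y \<otimes>\<^bsub>F2\<^esub> z = x \<otimes>\<^bsub>F2\<^esub> (y \<otimes>\<^bsub>F2\<^esub> z)"
    by (simp add: F2_def reduce_append_reduce_left reduce_append_reduce_right del: reduce.simps)
qed (auto simp: F2_def)

interpretation F2: group F2
  by (rule group_F2)

lemma carrier_F2_iff: "w \<in> carrier F2 \<longleftrightarrow> reduced w"
  by (simp add: F2_def reduce_eq_iff_reduced)

lemma mult_F2: "u \<otimes>\<^bsub>F2\<^esub> v = reduce (u @ v)"
  by (simp add: F2_def)

lemma one_F2: "\<one>\<^bsub>F2\<^esub> = []"
  by (simp add: F2_def)

lemma inv_F2: "reduced w \<Longrightarrow> inv\<^bsub>F2\<^esub> w = inverse_word w"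
  by (rule F2.inv_equality) (auto simp: F2_def reduce_inverse_word_append reduce_eq_iff_reduced)

lemma word_length_le: "reduce xs = g \<Longrightarrow> word_length g \<le> length xs"
  unfolding word_length_def by (rule Least_le) blast

lemma gamma_Suc_eq: "gamma (Suc n) = lower_central_series F2 n"
proof (induction n)
  case (Suc n)
  have "gamma (Suc (Suc n)) = comm_subgroup (lower_central_series F2 n)"
    using gamma.simps(2)[of "Suc n"] Suc.IH by (simp only: nat.distinct if_False)
  also have "\<dots> = lower_central_series F2 (Suc n)"
    unfolding comm_subgroup_def lower_central_series.simps(2) commutator_set_def commutator_def ..
  finally show ?case .
qed simp

lemma commutator_mem_gamma:
  assumes "x \<in> gamma i" "y \<in> gamma j" "i \<ge> 1" "j \<ge> 1"
  shows "commutator F2 x y \<in> gamma (i + j)"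
proof -
  obtain i' j' where i: "i = Suc i'" and j: "j = Suc j'"
    using assms(3,4) by (cases i; cases j) auto
  have "x \<in> lower_central_series F2 i'" "y \<in> lower_central_series F2 j'"
    using assms(1,2) by (simp_all only: i j gamma_Suc_eq)
  then have "commutator F2 x y \<in> lower_central_series F2 (Suc (i' + j'))"
    by (rule F2.commutator_mem_lower_central_series)
  then show ?thesis
    unfolding i j by (simp only: add_Suc add_Suc_right gamma_Suc_eq)
qed

lemma gamma_subgroup: "subgroup (gamma n) F2"
  by (cases n) (simp_all only: gamma.simps(1) gamma_Suc_eq F2.subgroup_self
      F2.lower_central_series_subgroup)

section \<open>Short words deep in the lower central series\<close>

definition letter_a :: letter where "letter_a = (False, False)"
definition letter_b :: letter where "letter_b = (True, False)"

text \<open>With \<open>C\<^sub>k = Y\<^sub>k\<^sup>-\<^sup>1 Y\<^sub>k\<^sub>+\<^sub>1 Y\<^sub>k\<close> one has \<open>Y\<^sub>k\<^sub>+\<^sub>2 = C\<^sub>k Y\<^sub>k\<^sub>+\<^sub>1\<^sup>-\<^sup>1\<close> and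
  \<open>C\<^sub>k\<^sub>+\<^sub>1 = Y\<^sub>k\<^sub>+\<^sub>1\<^sup>-\<^sup>1 C\<^sub>k\<close>, and no cancellation occurs in these products; so
  \<open>witness_pair k = (Y\<^sub>k\<^sub>+\<^sub>1, C\<^sub>k)\<close> is computed by plain concatenation.\<close>
fun witness_pair :: "nat \<Rightarrow> letter list \<times> letter list" where
  "witness_pair 0 = ([letter_a, letter_b], [letter_b, letter_a])"
| "witness_pair (Suc k) =
     (snd (witness_pair k) @ inverse_word (fst (witness_pair k)),
      inverse_word (fst (witness_pair k)) @ snd (witness_pair k))"

fun witness :: "nat \<Rightarrow> letter list" where
  "witness 0 = [letter_a]"
| "witness (Suc k) = fst (witness_pair k)"

text \<open>Endpoint letters of \<open>Y\<^sub>k\<^sub>+\<^sub>1\<close> and \<open>C\<^sub>k\<close>; their 3-periodicity is the invariant that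
  rules out cancellation at the junctions.\<close>
definition witness_endpoints :: "nat \<Rightarrow> letter \<times> letter \<times> letter \<times> letter" where
  "witness_endpoints k =
     (if k mod 3 = 0 then (letter_a, letter_b, letter_b, letter_a)
      else if k mod 3 = 1 then (letter_b, inv_letter letter_a, inv_letter letter_b, letter_a)
      else (inv_letter letter_b, inv_letter letter_b, letter_a, letter_a))"

lemma hd_inverse_word: "w \<noteq> [] \<Longrightarrow> hd (inverse_word w) = inv_letter (last w)"
  by (simp add: inverse_word_def hd_rev last_map)

lemma last_inverse_word: "w \<noteq> [] \<Longrightarrow> last (inverse_word w) = inv_letter (hd w)"
  by (simp add: inverse_word_def last_rev hd_map)

lemma inverse_word_eq_Nil_iff [simp]: "inverse_word w = [] \<longleftrightarrow> w = []"
  by (simp add: inverse_word_def)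

lemma length_inverse_word [simp]: "length (inverse_word w) = length w"
  by (simp add: inverse_word_def)

lemma witness_pair_reduced:
  "reduced (fst (witness_pair k)) \<and> reduced (snd (witness_pair k))
    \<and> fst (witness_pair k) \<noteq> [] \<and> snd (witness_pair k) \<noteq> []
    \<and> (hd (fst (witness_pair k)), last (fst (witness_pair k)),
       hd (snd (witness_pair k)), last (snd (witness_pair k))) = witness_endpoints k"
proof (induction k)
  case 0
  then show ?case by (simp add: witness_endpoints_def letter_a_def letter_b_def inv_letter_def)
next
  case (Suc k)
  obtain y c where yc: "witness_pair k = (y, c)" by fastforce
  have IH: "reduced y" "reduced c" "y \<noteq> []" "c \<noteq> []"
    "(hd y, last y, hd c, last c) = witness_endpoints k"
    using Suc yc by auto
  consider "k mod 3 = 0" | "k mod 3 = 1" | "k mod 3 = 2" by linarith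
  then show ?case using IH
    by cases (simp_all add: yc reduced_append hd_inverse_word last_inverse_word mod_Suc
        witness_endpoints_def letter_a_def letter_b_def inv_letter_def)
qed

lemma length_witness_pair:
  "length (fst (witness_pair k)) = 2 ^ Suc k \<and> length (snd (witness_pair k)) = 2 ^ Suc k"
  by (induction k) auto

lemma reduced_witness: "reduced (witness k)"
  using witness_pair_reduced by (cases k) auto

lemma witness_neq_Nil: "witness k \<noteq> []"
  using witness_pair_reduced by (cases k) auto

lemma length_witness: "length (witness k) = 2 ^ k"
  using length_witness_pair by (cases k) auto

lemma witness_in_carrier: "witness k \<in> carrier F2"
  using reduced_witness carrier_F2_iff by blast

lemma snd_witness_pair_in_carrier: "snd (witness_pair k) \<in> carrier F2"
  using witness_pair_reduced carrier_F2_iff by blast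

lemma witness_Suc_Suc_eq:
  "witness (Suc (Suc k)) = snd (witness_pair k) \<otimes>\<^bsub>F2\<^esub> inv\<^bsub>F2\<^esub> (witness (Suc k))"
proof -
  have "reduced (snd (witness_pair k) @ inverse_word (fst (witness_pair k)))"
    using witness_pair_reduced[of "Suc k"] by simp
  then show ?thesis using witness_pair_reduced[of k] by (simp add: mult_F2 inv_F2 reduce_reduced)
qed

lemma snd_witness_pair_Suc_eq:
  "snd (witness_pair (Suc k)) = inv\<^bsub>F2\<^esub> (witness (Suc k)) \<otimes>\<^bsub>F2\<^esub> snd (witness_pair k)"
proof -
  have "reduced (inverse_word (fst (witness_pair k)) @ snd (witness_pair k))"
    using witness_pair_reduced[of "Suc k"] by simp
  then show ?thesis using witness_pair_reduced[of k] by (simp add: mult_F2 inv_F2 reduce_reduced)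
qed

lemma snd_witness_pair_eq_conj:
  "snd (witness_pair k) = inv\<^bsub>F2\<^esub> (witness k) \<otimes>\<^bsub>F2\<^esub> witness (Suc k) \<otimes>\<^bsub>F2\<^esub> witness k"
proof (cases k)
  case 0
  then show ?thesis
    by (simp add: mult_F2 inv_F2 inverse_word_def letter_a_def letter_b_def inv_letter_def)
next
  case (Suc m)
  have "inv\<^bsub>F2\<^esub> (witness k) \<otimes>\<^bsub>F2\<^esub> witness (Suc k) \<otimes>\<^bsub>F2\<^esub> witness k
      = inv\<^bsub>F2\<^esub> (witness (Suc m)) \<otimes>\<^bsub>F2\<^esub> (snd (witness_pair m) \<otimes>\<^bsub>F2\<^esub> inv\<^bsub>F2\<^esub> (witness (Suc m)))
          \<otimes>\<^bsub>F2\<^esub> witness (Suc m)"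
    using Suc witness_Suc_Suc_eq by simp
  also have "\<dots> = inv\<^bsub>F2\<^esub> (witness (Suc m)) \<otimes>\<^bsub>F2\<^esub> snd (witness_pair m)"
    using witness_in_carrier[of "Suc m"] snd_witness_pair_in_carrier[of m] by (simp add: F2.m_assoc)
  finally show ?thesis using Suc snd_witness_pair_Suc_eq by simp
qed

lemma witness_Suc_Suc_eq_commutator:
  "witness (Suc (Suc k)) = commutator F2 (inv\<^bsub>F2\<^esub> (witness k)) (witness (Suc k))"
  using witness_Suc_Suc_eq[of k] snd_witness_pair_eq_conj[of k] witness_in_carrier[of k]
  by (simp add: commutator_def)

lemma witness_mem_gamma: "witness k \<in> gamma (fib (Suc k))"
proof (induction k rule: fib.induct)
  case 1
  show ?case using witness_in_carrier[of 0] by (simp add: One_nat_def del: witness.simps)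
next
  case 2
  show ?case using witness_in_carrier[of "Suc 0"] by (simp add: One_nat_def del: witness.simps)
next
  case (3 k)
  have "inv\<^bsub>F2\<^esub> (witness k) \<in> gamma (fib (Suc k))"
    using "3.IH"(2) by (rule subgroup.m_inv_closed[OF gamma_subgroup])
  moreover have "fib (Suc k) \<ge> 1" "fib (Suc (Suc k)) \<ge> 1"
    using fib_neq_0_nat[of "Suc k"] fib_neq_0_nat[of "Suc (Suc k)"] by simp_all
  ultimately have "commutator F2 (inv\<^bsub>F2\<^esub> (witness k)) (witness (Suc k))
      \<in> gamma (fib (Suc k) + fib (Suc (Suc k)))"
    using "3.IH"(1) by (intro commutator_mem_gamma)
  then show ?case
    by (simp only: witness_Suc_Suc_eq_commutator fib.simps(3) add.commute)
qed

lemma alpha_seq_fib_le: "alpha_seq (fib (Suc k)) \<le> 2 ^ k"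
proof -
  have "witness k \<in> gamma (fib (Suc k)) - {\<one>\<^bsub>F2\<^esub>}"
    using witness_mem_gamma witness_neq_Nil by (simp add: one_F2)
  then have "alpha_seq (fib (Suc k)) \<le> word_length (witness k)"
    unfolding alpha_seq_def by (intro Least_le) blast
  also have "\<dots> \<le> 2 ^ k"
    using word_length_le[OF reduce_reduced[OF reduced_witness]] by (simp add: length_witness)
  finally show ?thesis .
qed

section \<open>Growth of the exponent\<close>

lemma golden_ratio_gt_1: "golden_ratio > 1"
  by (simp add: golden_ratio_def)

lemma golden_ratio_power_le_fib: "golden_ratio ^ n \<le> fib (Suc (Suc n))"
proof (induction n rule: fib.induct)
  case 2
  have "sqrt 5 \<le> 3" by (rule real_le_lsqrt) auto
  then show ?case by (simp add: golden_ratio_def)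
next
  case (3 n)
  have "golden_ratio ^ Suc (Suc n) = golden_ratio ^ Suc n + golden_ratio ^ n"
    by (simp add: golden_ratio_def field_simps power2_eq_square)
  also have "\<dots> \<le> fib (Suc (Suc (Suc (Suc n))))"
    using "3.IH" by simp
  finally show ?case .
qed simp

lemma log_alpha_seq_fib_le: "log 2 (alpha_seq (fib (Suc k))) \<le> k"
proof (cases "alpha_seq (fib (Suc k)) = 0")
  case False
  then have "log 2 (alpha_seq (fib (Suc k))) \<le> log 2 (2 ^ k)"
    using alpha_seq_fib_le[of k] by (subst log_le_cancel_iff) (auto simp flip: of_nat_le_iff)
  then show ?thesis by (simp add: log_nat_power)
qed (simp add: log_def)

lemma log_golden_ratio_pos: "0 < log 2 golden_ratio"
  using golden_ratio_gt_1 by simp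

lemma log_fib_ge: "n * log 2 golden_ratio \<le> log 2 (fib (Suc (Suc n)))"
proof -
  have "0 < golden_ratio ^ n" using golden_ratio_gt_1 by simp
  then have "log 2 (golden_ratio ^ n) \<le> log 2 (fib (Suc (Suc n)))"
    using golden_ratio_power_le_fib[of n] by (intro log_mono) simp_all
  then show ?thesis using golden_ratio_gt_1 by (simp add: log_nat_power)
qed

lemma alpha_seq_ratio_fib_le:
  "log 2 (alpha_seq (fib (k + 3))) / log 2 (fib (k + 3))
    \<le> (real k + 2) / (real k + 1) / log 2 golden_ratio"
proof -
  have num: "log 2 (alpha_seq (fib (k + 3))) \<le> real k + 2"
    using log_alpha_seq_fib_le[of "Suc (Suc k)"] by (simp add: numeral_3_eq_3)
  have den: "(real k + 1) * log 2 golden_ratio \<le> log 2 (fib (k + 3))"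
    using log_fib_ge[of "Suc k"] by (simp add: numeral_3_eq_3 algebra_simps)
  have "0 < (real k + 1) * log 2 golden_ratio" using log_golden_ratio_pos by simp
  then have "log 2 (alpha_seq (fib (k + 3))) / log 2 (fib (k + 3))
      \<le> (real k + 2) / ((real k + 1) * log 2 golden_ratio)"
    using num den by (intro frac_le) auto
  then show ?thesis by (simp add: field_simps)
qed

theorem theorem1p1:
  assumes "convergent (\<lambda>n. log 2 (real (alpha_seq n)) / log 2 (real n))"
  shows "lim (\<lambda>n. log 2 (real (alpha_seq n)) / log 2 (real n)) \<le> log golden_ratio 2"
proof -
  define X where "X = (\<lambda>n. log 2 (real (alpha_seq n)) / log 2 (real n))"
  have "strict_mono (\<lambda>k. fib (k + 3))"
    by (rule strict_mono_Suc_iff[THEN iffD2]) (simp add: numeral_3_eq_3 fib_neq_0_nat)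
  then have "(\<lambda>k. X (fib (k + 3))) \<longlonglongrightarrow> lim X"
    using assms LIMSEQ_subseq_LIMSEQ unfolding X_def convergent_LIMSEQ_iff o_def by blast
  moreover have "(\<lambda>k. (real k + 2) / (real k + 1) / log 2 golden_ratio) \<longlonglongrightarrow> 1 / log 2 golden_ratio"
  proof -
    have "(\<lambda>k. (real k + 2) / (real k + 1)) \<longlonglongrightarrow> 1" by real_asymp
    then show ?thesis using log_golden_ratio_pos by (intro tendsto_divide tendsto_const) auto
  qed
  ultimately have "lim X \<le> 1 / log 2 golden_ratio"
    using alpha_seq_ratio_fib_le unfolding X_def by (intro LIMSEQ_le) auto
  then show ?thesis by (simp add: X_def log_def)
qed

end
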